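(* With $\nu^{(n)}(\epsilon_0)$ and $\nu^{(n)}(\epsilon_1)$ the asymptotic densities of the sets $\{k\in\mathbf{N}:\xi_n(k)\text{ even}\}$ and $\{k\in\mathbf{N}:\xi_n(k)\text{ odd}\}$ respectively, one has $\lim_{n\to\infty}\nu^{(n)}(\epsilon_0)=2/3$ and $\lim_{n\to\infty}\nu^{(n)}(\epsilon_1)=1/3$.
   Context: $\mathbf{N}=\{1,2,3,\dots\}$. The asymptotic density of $K\subseteq\mathbf{N}$ is $\lim_{m\to\infty}\#(K\cap[1,m])/m$ when it exists. The Collatz map $\xi:\mathbf{N}\to\mathbf{N}$ is $\xi(\omega)=\omega/2$ if $\omega$ is even and $\xi(\omega)=3\omega+1$ if $\omega$ is odd; $\xi_n$ denotes its $n$-fold iterate, with $\xi_0$ the identity. *)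

theory Defs
  imports Complex_Main
begin

text \<open>The Collatz map on positive integers (0 is never reached from positive inputs).\<close>
definition collatz :: "nat \<Rightarrow> nat" where
  "collatz w = (if even w then w div 2 else 3 * w + 1)"

definition has_density :: "nat set \<Rightarrow> real \<Rightarrow> bool" where
  "has_density K d \<longleftrightarrow>
     ((\<lambda>m. real (card (K \<inter> {1..m})) / real m) \<longlongrightarrow> d) sequentially"

end

theory Submission
  imports Defs "HOL-Number_Theory.Cong"
begin

text \<open>The parity of \<open>(collatz ^^ n) k\<close> depends only on \<open>k mod 2 ^ (n + 1)\<close>, so the
  set of \<open>k\<close> with \<open>(collatz ^^ n) k\<close> even is periodic and has density \<open>c n / 2 ^ (n + 1)\<close>,
  where \<open>c n\<close> counts the residues with even image. Splitting residues modulo \<open>2 ^ (n + 3)\<close> by parity: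
  an even \<open>2 m\<close> is sent to \<open>m\<close> in one step, an odd \<open>2 m + 1\<close> to \<open>3 m + 2\<close> in two steps, and
  \<open>m \<mapsto> 3 m + 2\<close> permutes the residues modulo \<open>2 ^ (n + 2)\<close>. Hence
  \<open>c (n + 2) = c (n + 1) + 2 c n\<close>, so \<open>3 c n = 2 ^ (n + 2) - (-1) ^ n\<close> and the density is
  \<open>2/3 - (-1/2) ^ n / 6\<close>.\<close>

definition count_below :: "(nat \<Rightarrow> bool) \<Rightarrow> nat \<Rightarrow> nat" where
  "count_below P m = (\<Sum>k<m. of_bool (P k))"

lemma count_below_0 [simp]: "count_below P 0 = 0"
  by (simp add: count_below_def)

lemma count_below_mono: "m \<le> n \<Longrightarrow> count_below P m \<le> count_below P n"
  unfolding count_below_def by (rule sum_mono2) auto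

lemma count_below_add:
  "count_below P (m + n) = count_below P m + count_below (\<lambda>k. P (m + k)) n"
  unfolding count_below_def by (induction n) simp_all

lemma count_below_double:
  "count_below P (2 * m) = count_below (\<lambda>k. P (2 * k)) m + count_below (\<lambda>k. P (2 * k + 1)) m"
  unfolding count_below_def using sum_split_even_odd[of "\<lambda>k. of_bool (P k)" "\<lambda>k. of_bool (P k)" m]
  by simp

lemma count_below_bij_betw:
  assumes "bij_betw g {..<m} {..<m}"
  shows "count_below (\<lambda>k. P (g k)) m = count_below P m"
  unfolding count_below_def by (rule sum.reindex_bij_betw[OF assms])

lemma count_below_periodic:
  assumes "\<And>k. P (k + T) = P k"
  shows "count_below P m = m div T * count_below P T + count_below P (m mod T)"
proof -
  have "count_below P (q * T + r) = q * count_below P T + count_below P r" for q r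
  proof (induction q)
    case (Suc q)
    have "count_below P (Suc q * T + r) = count_below P (T + (q * T + r))"
      by (simp add: algebra_simps)
    also have "\<dots> = count_below P T + count_below P (q * T + r)"
      using assms by (simp add: count_below_add add.commute)
    finally show ?case using Suc by simp
  qed simp
  then show ?thesis by (metis div_mult_mod_eq)
qed

lemma count_below_deviation:
  assumes "T > 0" and "\<And>k. P (k + T) = P k"
  shows "\<bar>real (count_below P m) - real m * count_below P T / T\<bar> \<le> count_below P T"
proof -
  define c where "c = count_below P T"
  define q r where "q = m div T" and "r = m mod T"
  have m: "real m = real q * T + r"
    unfolding q_def r_def by (metis div_mult_mod_eq of_nat_add of_nat_mult)
  have "count_below P m = q * c + count_below P r"
    unfolding q_def r_def c_def using count_below_periodic[of P T, OF assms(2)] .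
  then have count: "real (count_below P m) = real q * c + count_below P r" by simp
  have "r < T" unfolding r_def using assms(1) by simp
  then have "real (count_below P r) \<le> c" unfolding c_def by (simp add: count_below_mono)
  moreover have "real r * c / T \<le> c"
  proof -
    have "real r * real c \<le> real T * real c" using \<open>r < T\<close> by (intro mult_right_mono) simp_all
    then show ?thesis using assms(1) by (simp add: divide_le_eq mult.commute)
  qed
  moreover have "real m * c / T = real q * c + real r * c / T"
    using assms(1) by (simp add: m field_simps)
  moreover have "0 \<le> real r * c / T" by simp
  ultimately show ?thesis unfolding c_def[symmetric] count abs_le_iff by linarith
qed

lemma tendsto_ratio_bounded_deviation:
  fixes a :: "nat \<Rightarrow> real"
  assumes "\<And>m. \<bar>a m - real m * d\<bar> \<le> C"
  shows "(\<lambda>m. a m / real m) \<longlonglongrightarrow> d"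
proof -
  have "(\<lambda>m. a m / real m - d) \<longlonglongrightarrow> 0"
  proof (rule tendsto_0_le[OF lim_const_over_n[of 1], where K = C])
    show "\<forall>\<^sub>F m in sequentially. norm (a m / real m - d) \<le> norm (1 / real m) * C"
    proof (rule eventually_sequentiallyI[of 1])
      fix m :: nat assume "1 \<le> m"
      then have "a m / real m - d = (a m - real m * d) / real m" by (simp add: field_simps)
      then show "norm (a m / real m - d) \<le> norm (1 / real m) * C"
        using assms[of m] by (simp add: abs_divide divide_right_mono)
    qed
  qed
  then show ?thesis by (simp add: LIM_zero_iff)
qed

lemma has_density_periodic:
  assumes "T > 0" and "\<And>k. P (k + T) = P k"
  shows "has_density {k. k \<ge> 1 \<and> P k} (count_below P T / T)"
proof -
  define c where "c = count_below P T"
  have card: "card ({k. k \<ge> 1 \<and> P k} \<inter> {1..m}) + of_bool (P 0) = count_below P (Suc m)" for m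
  proof -
    have "{k. k \<ge> 1 \<and> P k} \<inter> {1..m} = {1..m} \<inter> {k. P k}" by auto
    then have "card ({k. k \<ge> 1 \<and> P k} \<inter> {1..m}) = (\<Sum>k\<in>{1..m}. of_bool (P k))" by simp
    moreover have "{..<Suc m} = insert 0 {1..m}" by auto
    ultimately show ?thesis unfolding count_below_def by simp
  qed
  have "\<bar>real (card ({k. k \<ge> 1 \<and> P k} \<inter> {1..m})) - real m * (c / T)\<bar> \<le> c + c / T + 1" for m
  proof -
    have "\<bar>real (count_below P (Suc m)) - real (Suc m) * c / T\<bar> \<le> c"
      unfolding c_def by (rule count_below_deviation[of T P, OF assms])
    moreover have "real (card ({k. k \<ge> 1 \<and> P k} \<inter> {1..m})) + of_bool (P 0) = count_below P (Suc m)"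
      using card[of m] by (metis of_nat_add of_nat_of_bool)
    moreover have "real m * (c / T) = real (Suc m) * c / T - c / T" by (simp add: add_divide_distrib algebra_simps)
    moreover have "0 \<le> real c / T" "0 \<le> (of_bool (P 0) :: real)" "of_bool (P 0) \<le> (1::real)" by simp_all
    ultimately show ?thesis by (simp only: abs_le_iff) linarith
  qed
  then show ?thesis
    unfolding has_density_def c_def by (rule tendsto_ratio_bounded_deviation)
qed

lemma has_density_compl:
  assumes "has_density {k. k \<ge> 1 \<and> P k} d"
  shows "has_density {k. k \<ge> 1 \<and> \<not> P k} (1 - d)"
proof -
  have "card ({k. k \<ge> 1 \<and> \<not> P k} \<inter> {1..m}) = m - card ({k. k \<ge> 1 \<and> P k} \<inter> {1..m})" for m
  proof -
    have "{k. k \<ge> 1 \<and> \<not> P k} \<inter> {1..m} = {1..m} - ({k. k \<ge> 1 \<and> P k} \<inter> {1..m})" by auto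
    then show ?thesis by (simp add: card_Diff_subset)
  qed
  then have "real (card ({k. k \<ge> 1 \<and> \<not> P k} \<inter> {1..m})) / m
      = 1 - real (card ({k. k \<ge> 1 \<and> P k} \<inter> {1..m})) / m" if "m \<ge> 1" for m
    using that card_mono[of "{1..m}" "{k. k \<ge> 1 \<and> P k} \<inter> {1..m}"]
    by (simp add: of_nat_diff diff_divide_distrib)
  then have eq: "\<forall>\<^sub>F m in sequentially. 1 - real (card ({k. k \<ge> 1 \<and> P k} \<inter> {1..m})) / m
      = real (card ({k. k \<ge> 1 \<and> \<not> P k} \<inter> {1..m})) / m"
    by (auto intro: eventually_sequentiallyI[of 1])
  have "(\<lambda>m. 1 - real (card ({k. k \<ge> 1 \<and> P k} \<inter> {1..m})) / m) \<longlonglongrightarrow> 1 - d"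
    using assms unfolding has_density_def by (intro tendsto_intros)
  then show ?thesis unfolding has_density_def using eq by (rule Lim_transform_eventually)
qed

lemma funpow_collatz_add_mod:
  "(collatz ^^ n) (k + q * 2 ^ (n + j)) mod 2 ^ j = (collatz ^^ n) k mod 2 ^ j"
proof (induction n arbitrary: k q)
  case (Suc n)
  have "collatz (k + q * 2 ^ (Suc n + j)) = collatz k + (if even k then q else 6 * q) * 2 ^ (n + j)"
    by (auto simp: collatz_def)
  then show ?case using Suc by (simp only: funpow_Suc_right comp_apply)
qed simp

lemma even_funpow_collatz_cong:
  assumes "k mod 2 ^ (n + 1) = k' mod 2 ^ (n + 1)"
  shows "even ((collatz ^^ n) k) = even ((collatz ^^ n) k')"
proof -
  have mod_2: "even ((collatz ^^ n) k) = even ((collatz ^^ n) (k mod 2 ^ (n + 1)))" for k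
    using funpow_collatz_add_mod[of n "k mod 2 ^ (n + 1)" "k div 2 ^ (n + 1)" 1]
    by (simp add: even_iff_mod_2_eq_zero mod_div_mult_eq)
  show ?thesis using mod_2[of k] mod_2[of k'] assms by simp
qed

lemma inj_on_affine_mod:
  assumes "coprime a (N :: nat)"
  shows "inj_on (\<lambda>m. (a * m + b) mod N) {..<N}"
proof (rule inj_onI)
  fix m m' assume "m \<in> {..<N}" "m' \<in> {..<N}" and "(a * m + b) mod N = (a * m' + b) mod N"
  then have "[a * m = a * m'] (mod N)"
    by (simp add: cong_def[symmetric] cong_add_rcancel_nat)
  then have "[m = m'] (mod N)" using assms by (simp add: cong_mult_lcancel_nat)
  then show "m = m'" using \<open>m \<in> {..<N}\<close> \<open>m' \<in> {..<N}\<close> by (simp add: cong_less_modulus_unique_nat)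
qed

lemma bij_betw_affine_mod:
  assumes "coprime a (N :: nat)"
  shows "bij_betw (\<lambda>m. (a * m + b) mod N) {..<N} {..<N}"
proof -
  have "(\<lambda>m. (a * m + b) mod N) ` {..<N} \<subseteq> {..<N}" by auto
  with inj_on_affine_mod[OF assms] show ?thesis
    by (simp add: bij_betw_def endo_inj_surj)
qed

lemma even_funpow_collatz_periodic:
  "even ((collatz ^^ n) (k + 2 ^ (n + 1))) = even ((collatz ^^ n) k)"
  by (rule even_funpow_collatz_cong) simp

definition even_count :: "nat \<Rightarrow> nat" where
  "even_count n = count_below (\<lambda>k. even ((collatz ^^ n) k)) (2 ^ (n + 1))"

lemma even_count_0: "even_count 0 = 1"
  by (simp add: even_count_def count_below_def numeral_eq_Suc lessThan_Suc)

lemma even_count_1: "even_count 1 = 3"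
proof -
  have "{..<4::nat} = {0, 1, 2, 3}" by auto
  moreover have "collatz 0 = 0" "collatz 1 = 4" "collatz 2 = 1" "collatz 3 = 10"
    by (simp_all add: collatz_def)
  ultimately show ?thesis
    unfolding even_count_def count_below_def by (simp del: sum_of_bool_eq)
qed

lemma even_count_recurrence: "even_count (n + 2) = even_count (n + 1) + 2 * even_count n"
proof -
  define N :: nat where "N = 2 ^ (n + 2)"
  let ?E = "\<lambda>i k. even ((collatz ^^ i) k)"
  have two_steps: "(collatz ^^ (i + 2)) k = (collatz ^^ i) (collatz (collatz k))" for i k
    by (simp only: funpow_Suc_right numeral_2_eq_2 add_Suc_right add_0_right comp_apply)
  have "even_count (n + 2) = count_below (?E (n + 2)) (2 * N)"
    unfolding even_count_def N_def by simp
  also have "\<dots> = count_below (\<lambda>m. ?E (n + 2) (2 * m)) N + count_below (\<lambda>m. ?E (n + 2) (2 * m + 1)) N"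
    by (rule count_below_double)
  also have "count_below (\<lambda>m. ?E (n + 2) (2 * m)) N = even_count (n + 1)"
  proof -
    have "(collatz ^^ (n + 2)) (2 * m) = (collatz ^^ (n + 1)) m" for m
      using funpow_add[of "n + 1" 1 collatz] by (simp add: collatz_def)
    then show ?thesis unfolding even_count_def N_def by simp
  qed
  also have "count_below (\<lambda>m. ?E (n + 2) (2 * m + 1)) N = 2 * even_count n"
  proof -
    have "(collatz ^^ (n + 2)) (2 * m + 1) = (collatz ^^ n) (3 * m + 2)" for m
      unfolding two_steps by (simp add: collatz_def)
    moreover have "?E n (3 * m + 2) = ?E n ((3 * m + 2) mod N)" for m
      unfolding N_def by (rule even_funpow_collatz_cong) (simp add: mod_mod_cancel le_imp_power_dvd)
    ultimately have "count_below (\<lambda>m. ?E (n + 2) (2 * m + 1)) N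
        = count_below (\<lambda>m. ?E n ((3 * m + 2) mod N)) N"
      by simp
    also have "\<dots> = count_below (?E n) N"
    proof -
      have "coprime 3 N" unfolding N_def coprime_power_right_iff by simp
      then show ?thesis by (rule count_below_bij_betw[OF bij_betw_affine_mod])
    qed
    also have "\<dots> = 2 * even_count n"
      using count_below_periodic[of "?E n" "2 ^ (n + 1)" N] even_funpow_collatz_periodic
      unfolding even_count_def N_def by (simp add: power_add)
    finally show ?thesis .
  qed
  finally show ?thesis .
qed

lemma even_count_closed_form: "3 * int (even_count n) = 2 ^ (n + 2) - (-1) ^ n"
proof (induction n rule: induct_nat_012)
  case 0
  show ?case by (simp add: even_count_0)
next
  case 1
  show ?case using even_count_1 by simp
next
  case (ge2 n)
  have "3 * int (even_count (n + 2)) = 3 * int (even_count (n + 1)) + 2 * (3 * int (even_count n))"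
    using even_count_recurrence[of n] by simp
  also have "\<dots> = 2 ^ (n + 2 + 2) - (-1) ^ (n + 2)"
    using ge2 by simp
  finally show ?case by simp
qed

lemma even_density_eq: "real (even_count n) / 2 ^ (n + 1) = 2/3 - (1/6) * (-1/2) ^ n"
proof -
  have "3 * real (even_count n) = 2 ^ (n + 2) - (-1) ^ n"
    using arg_cong[OF even_count_closed_form[of n], of real_of_int] by simp
  moreover have "(2::real) ^ n * (-1/2) ^ n = (-1) ^ n"
    by (simp add: power_mult_distrib[symmetric])
  ultimately show ?thesis by (simp add: field_simps)
qed

theorem corollary3p1:
  "\<exists>\<nu>0 \<nu>1 :: nat \<Rightarrow> real.
     (\<forall>n. has_density {k. k \<ge> 1 \<and> even ((collatz ^^ n) k)} (\<nu>0 n)) \<and>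
     (\<forall>n. has_density {k. k \<ge> 1 \<and> odd ((collatz ^^ n) k)} (\<nu>1 n)) \<and>
     (\<nu>0 \<longlonglongrightarrow> 2/3) \<and> (\<nu>1 \<longlonglongrightarrow> 1/3)"
proof (intro exI conjI allI)
  define \<nu>0 :: "nat \<Rightarrow> real" where "\<nu>0 n = 2/3 - (1/6) * (-1/2) ^ n" for n
  show even: "has_density {k. k \<ge> 1 \<and> even ((collatz ^^ n) k)} (\<nu>0 n)" for n
    using has_density_periodic[of "2 ^ (n + 1)" "\<lambda>k. even ((collatz ^^ n) k)",
        OF _ even_funpow_collatz_periodic]
    unfolding \<nu>0_def even_density_eq[symmetric] even_count_def by simp
  show "has_density {k. k \<ge> 1 \<and> odd ((collatz ^^ n) k)} (1 - \<nu>0 n)" for n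
    using has_density_compl[OF even] .
  have "\<nu>0 \<longlonglongrightarrow> 2/3 - (1/6) * 0"
    unfolding \<nu>0_def by (intro tendsto_intros LIMSEQ_power_zero) simp
  then show lim: "\<nu>0 \<longlonglongrightarrow> 2/3" by simp
  show "(\<lambda>n. 1 - \<nu>0 n) \<longlonglongrightarrow> 1/3"
    using tendsto_diff[OF tendsto_const lim, of 1] by simp
qed

end
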